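(* Let $\mathcal{F}$ be a monotone feature. Then $\sigma^{\mathcal{F}}=\varrho^{\mathcal{F}}$, i.e. $\sigma^{\mathcal{F}}_{(G,f)}(u,v)=\varrho^{\mathcal{F}}_{(G,f)}(u,v)$ for every weighted graph $(G,f)$ and every $(u,v)\in\Delta^+$.
   Context: Graphs are finite simple undirected graphs; a weighted graph is $(G,f)$ with $G=(V,E)$, $f:E\to\mathbb{R}$. For $u\in\mathbb{R}$, $G_u=(V_u,E_u)$ is the subgraph induced by the edge set $f^{-1}((-\infty,u])$, $G_{+\infty}=G$. Only subgraphs induced by edge sets are considered. $\Delta^+=\{(u,v)\in\mathbb{R}\times(\mathbb{R}\cup\{+\infty\}):u<v\}$. A feature $\mathcal{F}$ assigns to every graph $H=(V_H,E_H)$ a function $2^{V_H\cup E_H}\to\{true,false\}$. It is monotone if (i) for any graphs $G'=(V',E')\subset G''$ and any $X\subseteq V'\cup E'$, $\mathcal{F}(X)=true$ in $G''$ implies $\mathcal{F}(X)=true$ in $G'$; and (ii) in any graph, for $Y\subset X$, $\mathcal{F}(X)=true$ implies $\mathcal{F}(Y)=true$. $X\subseteq V\cup E$ is an $\mathcal{F}$-set at level $w$ if $X\subseteq V_w\cup E_w$ and $\mathcal{F}(X)=true$ in $G_w$. It is a steady $\mathcal{F}$-set at $(u,v)$ if it is an $\mathcal{F}$-set at every level $w\in[u,v]$, and a ranging $\mathcal{F}$-set at $(u,v)$ if it is an $\mathcal{F}$-set at some level $w\le u$ and at some level $w'\ge v$. $\sigma^{\mathcal{F}}_{(G,f)}(u,v)$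 (resp. $\varrho^{\mathcal{F}}_{(G,f)}(u,v)$) is the number of steady (resp. ranging) $\mathcal{F}$-sets at $(u,v)$. *)

theory Defs
  imports Complex_Main "HOL-Library.Extended_Real"
begin

type_synonym 'a graph = "'a set \<times> 'a set set"

definition is_graph :: "'a graph \<Rightarrow> bool" where
  "is_graph G \<longleftrightarrow> finite (fst G) \<and>
     (\<forall>e\<in>snd G. \<exists>x y. x \<noteq> y \<and> x \<in> fst G \<and> y \<in> fst G \<and> e = {x, y})"

datatype 'a gelem = Vert 'a | Edge "'a set"

definition elems :: "'a graph \<Rightarrow> 'a gelem set" where
  "elems G = Vert ` fst G \<union> Edge ` snd G"

definition subgraph :: "'a graph \<Rightarrow> 'a graph \<Rightarrow> bool" where
  "subgraph G' G'' \<longleftrightarrow> is_graph G' \<and> is_graph G'' \<and>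
     fst G' \<subseteq> fst G'' \<and> snd G' \<subseteq> snd G''"

type_synonym 'a feature = "'a graph \<Rightarrow> 'a gelem set \<Rightarrow> bool"

definition monotone_feature :: "'a feature \<Rightarrow> bool" where
  "monotone_feature F \<longleftrightarrow>
     (\<forall>G' G'' X. subgraph G' G'' \<and> X \<subseteq> elems G' \<and> F G'' X \<longrightarrow> F G' X) \<and>
     (\<forall>H X Y. is_graph H \<and> X \<subseteq> elems H \<and> Y \<subset> X \<and> F H X \<longrightarrow> F H Y)"

definition level_graph :: "'a graph \<Rightarrow> ('a set \<Rightarrow> real) \<Rightarrow> ereal \<Rightarrow> 'a graph" where
  "level_graph G f w =
     (if w = \<infinity> then G
      else (let Ew = {e \<in> snd G. ereal (f e) \<le> w} in (\<Union> Ew, Ew)))"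

definition F_set_at :: "'a feature \<Rightarrow> 'a graph \<Rightarrow> ('a set \<Rightarrow> real) \<Rightarrow> 'a gelem set \<Rightarrow> ereal \<Rightarrow> bool" where
  "F_set_at F G f X w \<longleftrightarrow> X \<subseteq> elems (level_graph G f w) \<and> F (level_graph G f w) X"

text \<open>Levels range over the reals together with +inf.\<close>
definition steady_F_set :: "'a feature \<Rightarrow> 'a graph \<Rightarrow> ('a set \<Rightarrow> real) \<Rightarrow> 'a gelem set \<Rightarrow> real \<Rightarrow> ereal \<Rightarrow> bool" where
  "steady_F_set F G f X u v \<longleftrightarrow>
     (\<forall>w. w \<noteq> -\<infinity> \<and> ereal u \<le> w \<and> w \<le> v \<longrightarrow> F_set_at F G f X w)"

definition ranging_F_set :: "'a feature \<Rightarrow> 'a graph \<Rightarrow> ('a set \<Rightarrow> real) \<Rightarrow> 'a gelem set \<Rightarrow> real \<Rightarrow> ereal \<Rightarrow> bool" where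
  "ranging_F_set F G f X u v \<longleftrightarrow>
     (\<exists>w. w \<noteq> -\<infinity> \<and> w \<le> ereal u \<and> F_set_at F G f X w) \<and>
     (\<exists>w'. w' \<noteq> -\<infinity> \<and> v \<le> w' \<and> F_set_at F G f X w')"

definition sigma :: "'a feature \<Rightarrow> 'a graph \<Rightarrow> ('a set \<Rightarrow> real) \<Rightarrow> real \<Rightarrow> ereal \<Rightarrow> nat" where
  "sigma F G f u v = card {X. X \<subseteq> elems G \<and> steady_F_set F G f X u v}"

definition rho :: "'a feature \<Rightarrow> 'a graph \<Rightarrow> ('a set \<Rightarrow> real) \<Rightarrow> real \<Rightarrow> ereal \<Rightarrow> nat" where
  "rho F G f u v = card {X. X \<subseteq> elems G \<and> ranging_F_set F G f X u v}"

end

theory Submission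
  imports Defs
begin

text \<open>Sublevel graphs grow with the level. So an \<open>\<F>\<close>-set at some level \<open>w \<le> u\<close> lies in
  every \<open>G\<^sub>t\<close> with \<open>t \<ge> u\<close>, and an \<open>\<F>\<close>-set at some level \<open>w' \<ge> v\<close> stays an \<open>\<F>\<close>-set in
  every smaller sublevel graph containing it, by monotonicity of \<open>\<F>\<close> under subgraphs.
  Hence every ranging \<open>\<F>\<close>-set at \<open>(u, v)\<close> is steady; the converse holds trivially, so
  both counts enumerate the same sets.\<close>

lemma is_graph_level_graph:
  assumes "is_graph G"
  shows "is_graph (level_graph G f w)"
proof (cases "w = \<infinity>")
  case True
  then show ?thesis using assms by (simp add: level_graph_def)
next
  case False
  define Ew where "Ew = {e \<in> snd G. ereal (f e) \<le> w}"
  have level: "level_graph G f w = (\<Union> Ew, Ew)"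
    using False by (simp add: level_graph_def Ew_def Let_def)
  have edges: "\<forall>e\<in>snd G. \<exists>x y. x \<noteq> y \<and> x \<in> fst G \<and> y \<in> fst G \<and> e = {x, y}"
    and "finite (fst G)"
    using assms unfolding is_graph_def by auto
  have "\<exists>x y. x \<noteq> y \<and> x \<in> \<Union> Ew \<and> y \<in> \<Union> Ew \<and> e = {x, y}" if "e \<in> Ew" for e
  proof -
    from that edges obtain x y where "x \<noteq> y" "e = {x, y}"
      unfolding Ew_def by blast
    moreover from that \<open>e = {x, y}\<close> have "x \<in> \<Union> Ew" "y \<in> \<Union> Ew"
      by auto
    ultimately show ?thesis by blast
  qed
  moreover have "\<Union> Ew \<subseteq> fst G"
    using edges unfolding Ew_def by fastforce
  then have "finite (\<Union> Ew)"
    using \<open>finite (fst G)\<close> by (rule finite_subset)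
  ultimately show ?thesis
    unfolding level is_graph_def by simp
qed

lemma subgraph_level_graph_mono:
  assumes "is_graph G" "w \<le> w'"
  shows "subgraph (level_graph G f w) (level_graph G f w')"
proof -
  have "fst (level_graph G f w) \<subseteq> fst (level_graph G f w') \<and>
        snd (level_graph G f w) \<subseteq> snd (level_graph G f w')"
  proof (cases "w' = \<infinity>")
    case True
    then show ?thesis
      using assms unfolding level_graph_def is_graph_def by (auto simp: Let_def)
  next
    case False
    with assms(2) have "w \<noteq> \<infinity>" by auto
    with False assms(2) show ?thesis
      unfolding level_graph_def by (auto simp: Let_def)
  qed
  then show ?thesis
    using assms(1) is_graph_level_graph unfolding subgraph_def by blast
qed

lemma elems_subgraph: "subgraph H K \<Longrightarrow> elems H \<subseteq> elems K"
  unfolding subgraph_def elems_def by auto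

lemma F_set_at_between:
  assumes "monotone_feature F" "is_graph G"
    and "w \<le> t" "t \<le> w'"
    and "F_set_at F G f X w" "F_set_at F G f X w'"
  shows "F_set_at F G f X t"
proof -
  have X: "X \<subseteq> elems (level_graph G f t)"
    using assms(5) elems_subgraph[OF subgraph_level_graph_mono[OF assms(2,3)]]
    unfolding F_set_at_def by blast
  moreover have "F (level_graph G f t) X"
    using assms(1,6) X subgraph_level_graph_mono[OF assms(2,4)]
    unfolding monotone_feature_def F_set_at_def by blast
  ultimately show ?thesis
    unfolding F_set_at_def by blast
qed

lemma steady_F_set_iff_ranging_F_set:
  assumes "monotone_feature F" "is_graph G" "ereal u < v"
  shows "steady_F_set F G f X u v \<longleftrightarrow> ranging_F_set F G f X u v"
proof
  assume steady: "steady_F_set F G f X u v"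
  have "v \<noteq> -\<infinity>" using assms(3) by auto
  with steady assms(3) have "F_set_at F G f X (ereal u)" "F_set_at F G f X v"
    unfolding steady_F_set_def by auto
  with \<open>v \<noteq> -\<infinity>\<close> show "ranging_F_set F G f X u v"
    unfolding ranging_F_set_def by (metis MInfty_neq_ereal(2) order.refl)
next
  assume "ranging_F_set F G f X u v"
  then obtain w w' where "w \<le> ereal u" "F_set_at F G f X w" "v \<le> w'" "F_set_at F G f X w'"
    unfolding ranging_F_set_def by blast
  then show "steady_F_set F G f X u v"
    using F_set_at_between[OF assms(1,2)] unfolding steady_F_set_def
    by (meson order_trans)
qed

theorem proposition3:
  fixes F :: "'a feature" and G :: "'a graph" and f :: "'a set \<Rightarrow> real"
    and u :: real and v :: ereal
  assumes "monotone_feature F"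
    and "is_graph G"
    and "ereal u < v"
  shows "sigma F G f u v = rho F G f u v"
  using steady_F_set_iff_ranging_F_set[OF assms] unfolding sigma_def rho_def by simp

end
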